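(* Let $L=(L;\wedge,\vee,{}^\ast,{}^\prime,0,1)$ be a pseudocomplemented de Morgan algebra and let $(P;\tau,\leq,\zeta)$ be its dual $pm$-space. Then $L$ is regular if and only if the poset $(P;\leq)$ has height at most $1$, i.e. every chain in $(P;\leq)$ has at most $2$ elements.
   Context: A pseudocomplemented de Morgan algebra ($pm$-algebra) is an algebra $(L;\wedge,\vee,{}^\ast,{}^\prime,0,1)$ such that $(L;\wedge,\vee,0,1)$ is a bounded distributive lattice, ${}^\ast$ is the pseudocomplement ($x\wedge y=0$ iff $y\le x^\ast$), and ${}^\prime$ is a de Morgan involution ($(x\vee y)'=x'\wedge y'$, $(x\wedge y)'=x'\vee y'$, $0'=1$, $1'=0$, $x''=x$). An algebra is regular if any two congruences on it having a common class are equal. A $pm$-space is $(P;\tau,\le,\zeta)$ where $(P;\tau,\le)$ is a Priestley space, $[X)$ is clopen for every clopen decreasing $X\subseteq P$, and $\zeta$ is a continuous order-reversing involution of $P$. The dual $pm$-space of $L$ is the set of prime ideals of $L$ ordered by inclusion, with the Priestley topology and $\zeta(I)=\{a\in L: a'\notin I\}$; $L$ is isomorphic to the algebra of clopen decreasing subsets of its dual space with $\cap,\cup,\emptyset,P$, $X^\ast=P\setminus[X)$ and $X'=P\setminus\zeta(X)$. *)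

theory Defs
  imports Main
begin

definition pm_algebra :: "('a::{bounded_lattice,distrib_lattice} \<Rightarrow> 'a) \<Rightarrow> ('a \<Rightarrow> 'a) \<Rightarrow> bool" where
  "pm_algebra pc neg \<longleftrightarrow>
     (\<forall>x y. inf x y = bot \<longleftrightarrow> y \<le> pc x) \<and>
     (\<forall>x y. neg (sup x y) = inf (neg x) (neg y)) \<and>
     (\<forall>x y. neg (inf x y) = sup (neg x) (neg y)) \<and>
     neg bot = top \<and> neg top = bot \<and>
     (\<forall>x. neg (neg x) = x)"

definition pm_congruence :: "('a::{bounded_lattice,distrib_lattice} \<Rightarrow> 'a) \<Rightarrow> ('a \<Rightarrow> 'a) \<Rightarrow> 'a rel \<Rightarrow> bool" where
  "pm_congruence pc neg \<theta> \<longleftrightarrow>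
     equiv UNIV \<theta> \<and>
     (\<forall>a b c d. (a, b) \<in> \<theta> \<longrightarrow> (c, d) \<in> \<theta> \<longrightarrow> (inf a c, inf b d) \<in> \<theta>) \<and>
     (\<forall>a b c d. (a, b) \<in> \<theta> \<longrightarrow> (c, d) \<in> \<theta> \<longrightarrow> (sup a c, sup b d) \<in> \<theta>) \<and>
     (\<forall>a b. (a, b) \<in> \<theta> \<longrightarrow> (pc a, pc b) \<in> \<theta>) \<and>
     (\<forall>a b. (a, b) \<in> \<theta> \<longrightarrow> (neg a, neg b) \<in> \<theta>)"

definition pm_regular :: "('a::{bounded_lattice,distrib_lattice} \<Rightarrow> 'a) \<Rightarrow> ('a \<Rightarrow> 'a) \<Rightarrow> bool" where
  "pm_regular pc neg \<longleftrightarrow>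
     (\<forall>\<theta> \<phi>. pm_congruence pc neg \<theta> \<and> pm_congruence pc neg \<phi> \<and>
        (\<exists>a b. \<theta> `` {a} = \<phi> `` {b}) \<longrightarrow> \<theta> = \<phi>)"

definition prime_ideal :: "'a::{bounded_lattice,distrib_lattice} set \<Rightarrow> bool" where
  "prime_ideal I \<longleftrightarrow>
     I \<noteq> {} \<and> I \<noteq> UNIV \<and>
     (\<forall>x y. x \<in> I \<longrightarrow> y \<le> x \<longrightarrow> y \<in> I) \<and>
     (\<forall>x y. x \<in> I \<longrightarrow> y \<in> I \<longrightarrow> sup x y \<in> I) \<and>
     (\<forall>x y. inf x y \<in> I \<longrightarrow> x \<in> I \<or> y \<in> I)"

text \<open>Underlying poset of the dual pm-space: prime ideals ordered by inclusion.
  Height at most 1: every chain has at most 2 elements.\<close>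

definition dual_points :: "'a::{bounded_lattice,distrib_lattice} set set" where
  "dual_points = {I. prime_ideal I}"

definition height_le_1 :: "'b set set \<Rightarrow> bool" where
  "height_le_1 P \<longleftrightarrow>
     (\<forall>C. C \<subseteq> P \<and> (\<forall>I\<in>C. \<forall>J\<in>C. I \<subseteq> J \<or> J \<subseteq> I) \<longrightarrow> finite C \<and> card C \<le> 2)"

end

theory Submission
  imports Defs
begin

text \<open>Write \<open>x\<^sup>+ = x'*'\<close> for the dual pseudocomplement. Both sides of the
  equivalence are equivalent to the law \<open>x \<sqinter> x\<^sup>+ \<le> y \<squnion> y*\<close>.
  Under the law, \<open>x \<equiv> y\<close> holds in a congruence as soon as \<open>x* \<equiv> y*\<close> and
  \<open>x\<^sup>+ \<equiv> y\<^sup>+\<close>; congruence of pseudocomplements is governed by the class of \<open>0\<close>, and that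
  class is determined by any single class. Conversely, the kernel of \<open>x \<mapsto> (x*, x'*)\<close> is a
  congruence whose class of \<open>0\<close> is \<open>{0}\<close>, so regularity makes it trivial, and this
  gives the law.
  On the dual side, a chain \<open>J \<subset> I \<subset> K\<close> of prime ideals violates the law with any
  \<open>y \<in> I - J\<close> (then \<open>y* \<in> J\<close>) and \<open>x \<in> K - I\<close> (then \<open>x\<^sup>+ \<notin> K\<close>); conversely, a
  prime ideal separating \<open>y \<squnion> y*\<close> from \<open>x \<sqinter> x\<^sup>+\<close> can be shrunk to exclude \<open>y\<close> and
  enlarged to contain \<open>x\<close> by the prime ideal theorem.\<close>

section \<open>Ideals, filters and the prime ideal theorem\<close>

definition lattice_ideal :: "'a::lattice set \<Rightarrow> bool" where
  "lattice_ideal I \<longleftrightarrow> I \<noteq> {} \<and> (\<forall>x y. x \<in> I \<longrightarrow> y \<le> x \<longrightarrow> y \<in> I) \<and>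
     (\<forall>x y. x \<in> I \<longrightarrow> y \<in> I \<longrightarrow> sup x y \<in> I)"

definition lattice_filter :: "'a::lattice set \<Rightarrow> bool" where
  "lattice_filter F \<longleftrightarrow> F \<noteq> {} \<and> (\<forall>x y. x \<in> F \<longrightarrow> x \<le> y \<longrightarrow> y \<in> F) \<and>
     (\<forall>x y. x \<in> F \<longrightarrow> y \<in> F \<longrightarrow> inf x y \<in> F)"

lemma lattice_idealD:
  assumes "lattice_ideal I"
  shows "I \<noteq> {}" and "x \<in> I \<Longrightarrow> y \<le> x \<Longrightarrow> y \<in> I"
    and "x \<in> I \<Longrightarrow> y \<in> I \<Longrightarrow> sup x y \<in> I"
  using assms unfolding lattice_ideal_def by blast+

lemma lattice_filterD:
  assumes "lattice_filter F"
  shows "F \<noteq> {}" and "x \<in> F \<Longrightarrow> x \<le> y \<Longrightarrow> y \<in> F"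
    and "x \<in> F \<Longrightarrow> y \<in> F \<Longrightarrow> inf x y \<in> F"
  using assms unfolding lattice_filter_def by blast+

lemma lattice_ideal_atMost: "lattice_ideal {..u}"
  unfolding lattice_ideal_def by auto

lemma lattice_filter_atLeast: "lattice_filter {v..}"
  unfolding lattice_filter_def by auto

lemma lattice_ideal_join_principal:
  assumes I: "lattice_ideal I"
  shows "lattice_ideal {z. \<exists>i\<in>I. z \<le> sup i b}"
  unfolding lattice_ideal_def
proof (intro conjI allI impI)
  obtain i where "i \<in> I" using lattice_idealD(1)[OF I] by blast
  then show "{z. \<exists>i\<in>I. z \<le> sup i b} \<noteq> {}" by (blast intro: sup_ge2)
  fix x y
  show "y \<in> {z. \<exists>i\<in>I. z \<le> sup i b}" if "x \<in> {z. \<exists>i\<in>I. z \<le> sup i b}" "y \<le> x"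
    using that order_trans by blast
  assume "x \<in> {z. \<exists>i\<in>I. z \<le> sup i b}" "y \<in> {z. \<exists>i\<in>I. z \<le> sup i b}"
  then obtain i j where ij: "i \<in> I" "x \<le> sup i b" "j \<in> I" "y \<le> sup j b" by blast
  have "sup i b \<le> sup (sup i j) b" "sup j b \<le> sup (sup i j) b"
    by (simp_all add: sup.coboundedI1 sup.coboundedI2)
  with ij(2,4) have "sup x y \<le> sup (sup i j) b"
    by (blast intro: sup_least order_trans)
  moreover have "sup i j \<in> I" using lattice_idealD(3)[OF I ij(1,3)] .
  ultimately show "sup x y \<in> {z. \<exists>i\<in>I. z \<le> sup i b}" by blast
qed

lemma lattice_filter_meet_principal:
  assumes F: "lattice_filter F"
  shows "lattice_filter {z. \<exists>c\<in>F. inf c a \<le> z}"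
  unfolding lattice_filter_def
proof (intro conjI allI impI)
  obtain c where "c \<in> F" using lattice_filterD(1)[OF F] by blast
  then show "{z. \<exists>c\<in>F. inf c a \<le> z} \<noteq> {}" by (blast intro: inf_le2)
  fix x y
  show "y \<in> {z. \<exists>c\<in>F. inf c a \<le> z}" if "x \<in> {z. \<exists>c\<in>F. inf c a \<le> z}" "x \<le> y"
    using that order_trans by blast
  assume "x \<in> {z. \<exists>c\<in>F. inf c a \<le> z}" "y \<in> {z. \<exists>c\<in>F. inf c a \<le> z}"
  then obtain c d where cd: "c \<in> F" "inf c a \<le> x" "d \<in> F" "inf d a \<le> y" by blast
  have "inf (inf c d) a \<le> inf c a" "inf (inf c d) a \<le> inf d a"
    by (simp_all add: inf.coboundedI1 inf.coboundedI2)
  with cd(2,4) have "inf (inf c d) a \<le> inf x y"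
    by (blast intro: inf_greatest order_trans)
  moreover have "inf c d \<in> F" using lattice_filterD(3)[OF F cd(1,3)] .
  ultimately show "inf x y \<in> {z. \<exists>c\<in>F. inf c a \<le> z}" by blast
qed

lemma lattice_ideal_Union_chain:
  assumes "C \<noteq> {}" and "chain\<^sub>\<subseteq> C" and ideals: "\<And>I. I \<in> C \<Longrightarrow> lattice_ideal I"
  shows "lattice_ideal (\<Union>C)"
  unfolding lattice_ideal_def
proof (intro conjI allI impI)
  show "\<Union>C \<noteq> {}" using assms(1) lattice_idealD(1)[OF ideals] by blast
  fix x y
  show "y \<in> \<Union>C" if "x \<in> \<Union>C" "y \<le> x"
    using that lattice_idealD(2)[OF ideals] by blast
  assume "x \<in> \<Union>C" "y \<in> \<Union>C"
  then obtain I J where IJ: "I \<in> C" "x \<in> I" "J \<in> C" "y \<in> J" by blast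
  from assms(2) IJ(1,3) have "I \<subseteq> J \<or> J \<subseteq> I" unfolding chain_subset_def by blast
  then show "sup x y \<in> \<Union>C"
    using IJ lattice_idealD(3)[OF ideals] by blast
qed

lemma prime_idealD:
  assumes "prime_ideal I"
  shows "lattice_ideal I" and "I \<noteq> UNIV" and "inf x y \<in> I \<Longrightarrow> x \<in> I \<or> y \<in> I"
  using assms unfolding prime_ideal_def lattice_ideal_def by blast+

lemma prime_ideal_down: "prime_ideal I \<Longrightarrow> x \<in> I \<Longrightarrow> y \<le> x \<Longrightarrow> y \<in> I"
  by (rule lattice_idealD(2)[OF prime_idealD(1)])

lemma prime_ideal_sup_iff: "prime_ideal I \<Longrightarrow> sup x y \<in> I \<longleftrightarrow> x \<in> I \<and> y \<in> I"
  by (meson prime_ideal_down lattice_idealD(3) prime_idealD(1) sup_ge1 sup_ge2)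

lemma prime_ideal_inf_iff: "prime_ideal I \<Longrightarrow> inf x y \<in> I \<longleftrightarrow> x \<in> I \<or> y \<in> I"
  by (meson prime_ideal_down prime_idealD(3) inf_le1 inf_le2)

lemma prime_ideal_bot:
  assumes "prime_ideal I"
  shows "bot \<in> I"
proof -
  obtain x where "x \<in> I" using lattice_idealD(1)[OF prime_idealD(1)[OF assms]] by blast
  then show ?thesis using prime_ideal_down[OF assms _ bot_least] by blast
qed

lemma prime_ideal_top:
  assumes "prime_ideal I"
  shows "top \<notin> I"
proof
  assume "top \<in> I"
  then have "x \<in> I" for x using prime_ideal_down[OF assms _ top_greatest] by blast
  then have "I = UNIV" by blast
  with prime_idealD(2)[OF assms] show False ..
qed

lemma lattice_filter_Compl_prime_ideal:
  assumes "prime_ideal I"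
  shows "lattice_filter (- I)"
  unfolding lattice_filter_def
proof (intro conjI allI impI)
  show "- I \<noteq> {}" using prime_ideal_top[OF assms] by blast
  show "y \<in> - I" if "x \<in> - I" "x \<le> y" for x y
    using that prime_ideal_down[OF assms, of y x] by blast
  show "inf x y \<in> - I" if "x \<in> - I" "y \<in> - I" for x y
    using that prime_ideal_inf_iff[OF assms] by blast
qed

lemma prime_ideal_if_maximal:
  fixes M :: "'a::{bounded_lattice,distrib_lattice} set"
  assumes M: "lattice_ideal M" and F: "lattice_filter F" and disj: "M \<inter> F = {}"
    and maximal: "\<And>J. lattice_ideal J \<Longrightarrow> M \<subseteq> J \<Longrightarrow> J \<inter> F = {} \<Longrightarrow> J = M"
  shows "prime_ideal M"
proof -
  have meets_F: "\<exists>m\<in>M. \<exists>f\<in>F. f \<le> sup m x" if "x \<notin> M" for x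
  proof (rule ccontr)
    let ?Mx = "{z. \<exists>m\<in>M. z \<le> sup m x}"
    assume "\<not> ?thesis"
    then have "?Mx \<inter> F = {}" by blast
    moreover have "M \<subseteq> ?Mx" using sup_ge1 by blast
    moreover obtain m where "m \<in> M" using lattice_idealD(1)[OF M] by blast
    then have "x \<in> ?Mx" by (blast intro: sup_ge2)
    ultimately show False
      using maximal[OF lattice_ideal_join_principal[OF M]] \<open>x \<notin> M\<close> by blast
  qed
  have prime: "x \<in> M \<or> y \<in> M" if xy: "inf x y \<in> M" for x y
  proof (rule ccontr)
    assume "\<not> ?thesis"
    then obtain m f n g where mf: "m \<in> M" "f \<in> F" "f \<le> sup m x"
      and ng: "n \<in> M" "g \<in> F" "g \<le> sup n y"
      using meets_F by meson
    have "inf f g \<le> inf (sup (sup m n) x) (sup (sup m n) y)"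
    proof (rule inf_mono)
      show "f \<le> sup (sup m n) x" using mf(3)
        by (rule order_trans) (simp add: sup.coboundedI1 le_supI1)
      show "g \<le> sup (sup m n) y" using ng(3)
        by (rule order_trans) (simp add: sup.coboundedI1 le_supI2)
    qed
    also have "\<dots> = sup (sup m n) (inf x y)" by (rule sup_inf_distrib1[symmetric])
    finally have "inf f g \<le> sup (sup m n) (inf x y)" .
    moreover have "sup (sup m n) (inf x y) \<in> M"
      using lattice_idealD(3)[OF M] mf(1) ng(1) xy by blast
    ultimately have "inf f g \<in> M" by (rule lattice_idealD(2)[OF M, rotated])
    moreover have "inf f g \<in> F" using lattice_filterD(3)[OF F mf(2) ng(2)] .
    ultimately show False using disj by blast
  qed
  obtain f where "f \<in> F" using lattice_filterD(1)[OF F] by blast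
  then have "M \<noteq> UNIV" using disj by blast
  with M prime show ?thesis
    unfolding prime_ideal_def lattice_ideal_def by blast
qed

theorem prime_ideal_theorem:
  fixes I :: "'a::{bounded_lattice,distrib_lattice} set"
  assumes I: "lattice_ideal I" and F: "lattice_filter F" and disj: "I \<inter> F = {}"
  shows "\<exists>P. prime_ideal P \<and> I \<subseteq> P \<and> P \<inter> F = {}"
proof -
  define S where "S = {J. lattice_ideal J \<and> I \<subseteq> J \<and> J \<inter> F = {}}"
  have "\<exists>U\<in>S. \<forall>J\<in>C. J \<subseteq> U" if C: "C \<in> chains S" for C
  proof (cases "C = {}")
    case True
    then show ?thesis using I disj unfolding S_def by blast
  next
    case False
    moreover from C have "chain\<^sub>\<subseteq> C" "C \<subseteq> S" unfolding chains_def by blast+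
    ultimately have "\<Union>C \<in> S"
      using lattice_ideal_Union_chain[of C] unfolding S_def by blast
    then show ?thesis by blast
  qed
  then obtain M where "M \<in> S" and max: "\<forall>J\<in>S. M \<subseteq> J \<longrightarrow> J = M"
    using Zorn_Lemma2[of S] by blast
  then have M: "lattice_ideal M" "I \<subseteq> M" "M \<inter> F = {}" unfolding S_def by blast+
  have "J = M" if "lattice_ideal J" "M \<subseteq> J" "J \<inter> F = {}" for J
    using max that \<open>I \<subseteq> M\<close> unfolding S_def by blast
  then have "prime_ideal M" using prime_ideal_if_maximal[OF M(1) F M(3)] by blast
  with M(2,3) show ?thesis by blast
qed

lemma prime_ideal_separation:
  fixes u v :: "'a::{bounded_lattice,distrib_lattice}"
  assumes "\<not> v \<le> u"
  shows "\<exists>P. prime_ideal P \<and> u \<in> P \<and> v \<notin> P"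
proof -
  have "{..u} \<inter> {v..} = {}"
  proof (rule equals0I)
    fix z assume "z \<in> {..u} \<inter> {v..}"
    then have "v \<le> z" "z \<le> u" by simp_all
    then have "v \<le> u" by (rule order_trans)
    with assms show False by contradiction
  qed
  from prime_ideal_theorem[OF lattice_ideal_atMost lattice_filter_atLeast this]
  obtain P where "prime_ideal P" "{..u} \<subseteq> P" "P \<inter> {v..} = {}"
    by blast
  moreover have "u \<in> {..u}" "v \<in> {v..}" by simp_all
  ultimately show ?thesis by blast
qed

section \<open>Pseudocomplements\<close>

locale pseudocomplement =
  fixes pc :: "'a::{bounded_lattice,distrib_lattice} \<Rightarrow> 'a"
  assumes inf_eq_bot_iff_le_pc: "inf x y = bot \<longleftrightarrow> y \<le> pc x"
begin

lemma inf_pc [simp]: "inf x (pc x) = bot"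
  using inf_eq_bot_iff_le_pc by blast

lemma pc_inf_self [simp]: "inf (pc x) x = bot"
  by (simp add: inf_commute)

lemma le_pc_pc: "x \<le> pc (pc x)"
  using inf_eq_bot_iff_le_pc pc_inf_self by blast

lemma pc_antimono:
  assumes "x \<le> y"
  shows "pc y \<le> pc x"
proof -
  have "inf x (pc y) \<le> inf y (pc y)" using assms by (rule inf_mono) simp
  then have "inf x (pc y) = bot" by (simp add: bot_unique)
  then show ?thesis using inf_eq_bot_iff_le_pc by blast
qed

lemma pc_pc_pc [simp]: "pc (pc (pc x)) = pc x"
  by (rule antisym) (rule pc_antimono[OF le_pc_pc], rule le_pc_pc)

lemma pc_bot [simp]: "pc bot = top"
  using inf_eq_bot_iff_le_pc[of bot top] by (simp add: top_unique)

lemma pc_top [simp]: "pc top = bot"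
  using inf_pc[of top] by (simp only: inf_top_left)

lemma pc_sup: "pc (sup x y) = inf (pc x) (pc y)"
proof (rule antisym)
  show "pc (sup x y) \<le> inf (pc x) (pc y)" by (simp add: pc_antimono)
  have "inf x (inf (pc x) (pc y)) = bot" "inf y (inf (pc x) (pc y)) = bot"
    by (simp add: inf_assoc[symmetric]) (metis inf_left_commute inf_pc inf_bot_right)
  then have "inf (sup x y) (inf (pc x) (pc y)) = bot"
    by (simp only: inf_sup_distrib2 sup_bot_left)
  then show "inf (pc x) (pc y) \<le> pc (sup x y)" using inf_eq_bot_iff_le_pc by blast
qed

lemma pc_sup_pc [simp]: "pc (sup x (pc x)) = bot"
  by (simp add: pc_sup)

lemma inf_pc_inf: "inf x (pc (inf x y)) = inf x (pc y)"
proof (rule antisym)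
  have "inf y (inf x (pc (inf x y))) = bot"
    using inf_pc[of "inf x y"] by (simp only: inf_aci)
  then show "inf x (pc (inf x y)) \<le> inf x (pc y)"
    by (simp add: inf_eq_bot_iff_le_pc)
  show "inf x (pc y) \<le> inf x (pc (inf x y))" by (simp add: le_infI2 pc_antimono)
qed

lemma pc_inf_pc_pc: "pc (inf (pc (pc x)) (pc (pc y))) = pc (inf x y)"
proof (rule antisym)
  show "pc (inf (pc (pc x)) (pc (pc y))) \<le> pc (inf x y)"
    by (rule pc_antimono) (rule inf_mono; rule le_pc_pc)
  have pc_pc_absorb: "inf a (pc (pc b)) = bot" if "inf b a = bot" for a b
  proof -
    have "inf a (pc (pc b)) \<le> inf (pc b) (pc (pc b))"
      using that by (intro inf_mono) (simp_all add: inf_eq_bot_iff_le_pc)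
    then show ?thesis by (simp add: bot_unique)
  qed
  let ?w = "pc (inf x y)"
  have "inf y (inf ?w x) = bot" using inf_pc[of "inf x y"] by (simp only: inf_aci)
  then have "inf (inf ?w x) (pc (pc y)) = bot" by (rule pc_pc_absorb)
  then have "inf x (inf ?w (pc (pc y))) = bot" by (simp add: inf_aci)
  then have "inf (inf ?w (pc (pc y))) (pc (pc x)) = bot" by (rule pc_pc_absorb)
  then have "inf (inf (pc (pc x)) (pc (pc y))) ?w = bot" by (simp add: inf_aci)
  then show "?w \<le> pc (inf (pc (pc x)) (pc (pc y)))" using inf_eq_bot_iff_le_pc by blast
qed

lemma pc_inf_dense:
  assumes "pc u = bot"
  shows "pc (inf u v) = pc v"
proof -
  have "pc (inf u v) = pc (inf (pc (pc u)) (pc (pc v)))" by (rule pc_inf_pc_pc[symmetric])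
  also have "\<dots> = pc v" using assms by simp
  finally show ?thesis .
qed

lemma pc_in_prime_ideal: "prime_ideal J \<Longrightarrow> a \<notin> J \<Longrightarrow> pc a \<in> J"
  using prime_ideal_bot[of J] prime_ideal_inf_iff[of J a "pc a"] by simp

lemma prime_ideal_below:
  assumes I: "prime_ideal I" and "pc a \<in> I"
  shows "\<exists>J. prime_ideal J \<and> J \<subseteq> I \<and> a \<notin> J"
proof -
  let ?G = "{z. \<exists>c\<in>- I. inf c a \<le> z}"
  have "bot \<notin> ?G"
  proof
    assume "bot \<in> ?G"
    then obtain c where "c \<notin> I" "inf c a \<le> bot" by blast
    then have "c \<le> pc a" using inf_eq_bot_iff_le_pc by (simp add: bot_unique inf_commute)
    with \<open>c \<notin> I\<close> \<open>pc a \<in> I\<close> show False using prime_ideal_down[OF I] by blast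
  qed
  then have "{..bot} \<inter> ?G = {}" by (auto simp: bot_unique)
  from prime_ideal_theorem[OF lattice_ideal_atMost
      lattice_filter_meet_principal[OF lattice_filter_Compl_prime_ideal[OF I]] this]
  obtain J where J: "prime_ideal J" "J \<inter> ?G = {}" by blast
  have "- I \<subseteq> ?G" using inf_le1 by blast
  moreover have "a \<in> ?G" using prime_ideal_top[OF I] by auto
  ultimately show ?thesis using J by blast
qed

end

section \<open>Pseudocomplemented de Morgan algebras\<close>

locale pm_alg = pseudocomplement pc for pc :: "'a::{bounded_lattice,distrib_lattice} \<Rightarrow> 'a" +
  fixes neg :: "'a \<Rightarrow> 'a"
  assumes neg_sup: "neg (sup x y) = inf (neg x) (neg y)"
    and neg_inf: "neg (inf x y) = sup (neg x) (neg y)"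
    and neg_bot: "neg bot = top"
    and neg_top: "neg top = bot"
    and neg_neg [simp]: "neg (neg x) = x"

lemma pm_alg_if_pm_algebra: "pm_algebra pc neg \<Longrightarrow> pm_alg pc neg"
  unfolding pm_algebra_def pm_alg_def pm_alg_axioms_def pseudocomplement_def by blast

context pm_alg
begin

lemma neg_antimono:
  assumes "x \<le> y"
  shows "neg y \<le> neg x"
proof -
  have "neg y = inf (neg x) (neg y)" using neg_sup[of x y] assms by (simp add: sup_absorb2)
  then show ?thesis by (metis inf_le1)
qed

definition pl :: "'a \<Rightarrow> 'a" where
  "pl x = neg (pc (neg x))"

lemma sup_pl [simp]: "sup x (pl x) = top"
proof -
  have "sup x (pl x) = neg (inf (neg x) (pc (neg x)))"
    unfolding pl_def by (simp only: neg_inf neg_neg)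
  then show ?thesis by (simp add: neg_bot)
qed

lemma pl_least:
  assumes "sup x y = top"
  shows "pl x \<le> y"
proof -
  have "inf (neg x) (neg y) = bot" using assms neg_sup[of x y] by (simp add: neg_top)
  then have "neg y \<le> pc (neg x)" by (simp add: inf_eq_bot_iff_le_pc)
  then show ?thesis unfolding pl_def using neg_antimono by fastforce
qed

lemma pc_neg_inf_pl [simp]: "pc (neg (inf x (pl x))) = bot"
  unfolding pl_def by (simp add: neg_inf)

lemma pl_notin_prime_ideal: "prime_ideal K \<Longrightarrow> b \<in> K \<Longrightarrow> pl b \<notin> K"
  using prime_ideal_sup_iff[of K b "pl b"] prime_ideal_top[of K] by simp

lemma prime_ideal_above:
  assumes I: "prime_ideal I" and "pl b \<notin> I"
  shows "\<exists>K. prime_ideal K \<and> I \<subseteq> K \<and> b \<in> K"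
proof -
  let ?Ib = "{z. \<exists>i\<in>I. z \<le> sup i b}"
  have "top \<notin> ?Ib"
  proof
    assume "top \<in> ?Ib"
    then obtain i where "i \<in> I" "sup b i = top" by (auto simp: top_unique sup_commute)
    with \<open>pl b \<notin> I\<close> show False using pl_least prime_ideal_down[OF I] by blast
  qed
  then have "?Ib \<inter> {top..} = {}" by (auto simp: top_unique)
  from prime_ideal_theorem[OF lattice_ideal_join_principal[OF prime_idealD(1)[OF I]]
      lattice_filter_atLeast this]
  obtain K where K: "prime_ideal K" "?Ib \<subseteq> K" by blast
  have "I \<subseteq> ?Ib" using sup_ge1 by blast
  moreover obtain i where "i \<in> I" using prime_ideal_bot[OF I] by blast
  then have "b \<in> ?Ib" using sup_ge2 by blast
  ultimately show ?thesis using K by blast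
qed

definition regularity_law :: bool where
  "regularity_law \<longleftrightarrow> (\<forall>x y. inf x (pl x) \<le> sup y (pc y))"

lemma not_regularity_law_if_strict_chain:
  fixes J I K :: "'a set"
  assumes J: "prime_ideal J" and I: "prime_ideal I" and K: "prime_ideal K"
    and "J \<subset> I" and "I \<subset> K"
  shows "\<not> regularity_law"
proof -
  obtain a where a: "a \<in> I" "a \<notin> J" using \<open>J \<subset> I\<close> by blast
  obtain b where b: "b \<in> K" "b \<notin> I" using \<open>I \<subset> K\<close> by blast
  have "pc a \<in> I" using pc_in_prime_ideal[OF J a(2)] \<open>J \<subset> I\<close> by blast
  with a(1) have "sup a (pc a) \<in> I" by (simp add: prime_ideal_sup_iff[OF I])
  moreover have "pl b \<notin> I" using pl_notin_prime_ideal[OF K b(1)] \<open>I \<subset> K\<close> by blast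
  with b(2) have "inf b (pl b) \<notin> I" by (simp add: prime_ideal_inf_iff[OF I])
  ultimately have "\<not> inf b (pl b) \<le> sup a (pc a)" using prime_ideal_down[OF I] by blast
  then show ?thesis unfolding regularity_law_def by blast
qed

lemma strict_chain_if_not_regularity_law:
  assumes "\<not> regularity_law"
  shows "\<exists>J I K :: 'a set. prime_ideal J \<and> prime_ideal I \<and> prime_ideal K \<and> J \<subset> I \<and> I \<subset> K"
proof -
  obtain a b where "\<not> inf b (pl b) \<le> sup a (pc a)"
    using assms unfolding regularity_law_def by blast
  from prime_ideal_separation[OF this] obtain I where I: "prime_ideal I"
    and "sup a (pc a) \<in> I" and "inf b (pl b) \<notin> I" by blast
  then have "a \<in> I" "pc a \<in> I" "b \<notin> I" "pl b \<notin> I"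
    by (simp_all add: prime_ideal_sup_iff prime_ideal_inf_iff)
  obtain J where J: "prime_ideal J" "J \<subseteq> I" "a \<notin> J"
    using prime_ideal_below[OF I \<open>pc a \<in> I\<close>] by blast
  obtain K where K: "prime_ideal K" "I \<subseteq> K" "b \<in> K"
    using prime_ideal_above[OF I \<open>pl b \<notin> I\<close>] by blast
  have "J \<subset> I" using J \<open>a \<in> I\<close> by blast
  moreover have "I \<subset> K" using K \<open>b \<notin> I\<close> by blast
  ultimately show ?thesis using I J(1) K(1) by blast
qed

end

section \<open>Congruences\<close>

lemma pm_congruence_refl: "pm_congruence pc neg \<theta> \<Longrightarrow> (x, x) \<in> \<theta>"
  unfolding pm_congruence_def by (auto elim: equivE dest: refl_onD)

lemma pm_congruence_sym: "pm_congruence pc neg \<theta> \<Longrightarrow> (x, y) \<in> \<theta> \<Longrightarrow> (y, x) \<in> \<theta>"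
  unfolding pm_congruence_def by (auto elim: equivE dest: symD)

lemma pm_congruence_trans:
  "pm_congruence pc neg \<theta> \<Longrightarrow> (x, y) \<in> \<theta> \<Longrightarrow> (y, z) \<in> \<theta> \<Longrightarrow> (x, z) \<in> \<theta>"
  unfolding pm_congruence_def by (auto elim: equivE dest: transD)

lemma pm_congruence_inf:
  "pm_congruence pc neg \<theta> \<Longrightarrow> (a, b) \<in> \<theta> \<Longrightarrow> (c, d) \<in> \<theta> \<Longrightarrow> (inf a c, inf b d) \<in> \<theta>"
  unfolding pm_congruence_def by simp

lemma pm_congruence_sup:
  "pm_congruence pc neg \<theta> \<Longrightarrow> (a, b) \<in> \<theta> \<Longrightarrow> (c, d) \<in> \<theta> \<Longrightarrow> (sup a c, sup b d) \<in> \<theta>"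
  unfolding pm_congruence_def by simp

lemma pm_congruence_pc: "pm_congruence pc neg \<theta> \<Longrightarrow> (a, b) \<in> \<theta> \<Longrightarrow> (pc a, pc b) \<in> \<theta>"
  unfolding pm_congruence_def by simp

lemma pm_congruence_neg: "pm_congruence pc neg \<theta> \<Longrightarrow> (a, b) \<in> \<theta> \<Longrightarrow> (neg a, neg b) \<in> \<theta>"
  unfolding pm_congruence_def by simp

lemma pm_congruence_inf_left:
  "pm_congruence pc neg \<theta> \<Longrightarrow> (a, b) \<in> \<theta> \<Longrightarrow> (inf c a, inf c b) \<in> \<theta>"
  by (rule pm_congruence_inf[OF _ pm_congruence_refl])

lemma pm_congruence_sup_left:
  "pm_congruence pc neg \<theta> \<Longrightarrow> (a, b) \<in> \<theta> \<Longrightarrow> (sup c a, sup c b) \<in> \<theta>"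
  by (rule pm_congruence_sup[OF _ pm_congruence_refl])

lemma pm_congruence_Id: "pm_congruence pc neg Id"
  unfolding pm_congruence_def by (simp add: equiv_def refl_on_def sym_def trans_def)

context pm_alg
begin

lemma pm_congruence_inf_if_pc_pl:
  assumes \<theta>: "pm_congruence pc neg \<theta>" and law: regularity_law
    and pc: "(pc x, pc y) \<in> \<theta>" and pl: "(pl x, pl y) \<in> \<theta>"
  shows "(x, inf x y) \<in> \<theta>"
proof -
  \<comment> \<open>\<open>x = (x \<sqinter> y) \<squnion> (x \<sqinter> y\<^sup>+) \<equiv> (x \<sqinter> y) \<squnion> (x \<sqinter> x\<^sup>+)\<close>, and by the law
    \<open>x \<sqinter> x\<^sup>+ = (x \<sqinter> x\<^sup>+ \<sqinter> y) \<squnion> (x \<sqinter> x\<^sup>+ \<sqinter> y*) \<equiv> (x \<sqinter> x\<^sup>+ \<sqinter> y) \<squnion> (x \<sqinter> x\<^sup>+ \<sqinter> x*) = x \<sqinter> x\<^sup>+ \<sqinter> y\<close>.\<close>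
  let ?p = "inf x (pl x)"
  have "sup (inf ?p y) (inf ?p (pc y)) = ?p"
    using law unfolding regularity_law_def by (simp add: inf_sup_distrib1[symmetric] inf_absorb1)
  moreover have "(sup (inf ?p y) (inf ?p (pc y)), sup (inf ?p y) (inf ?p (pc x))) \<in> \<theta>"
    using pm_congruence_sup_left[OF \<theta> pm_congruence_inf_left[OF \<theta> pm_congruence_sym[OF \<theta> pc]]] .
  moreover have "inf ?p (pc x) = bot" by (metis inf_pc inf_bot_right inf_commute inf_left_commute)
  ultimately have p: "(?p, inf ?p y) \<in> \<theta>" by simp
  have "sup (inf x y) (inf x (pl y)) = x" by (simp add: inf_sup_distrib1[symmetric])
  moreover have "(inf x (pl y), inf ?p y) \<in> \<theta>"
    using pm_congruence_trans[OF \<theta> pm_congruence_inf_left[OF \<theta> pm_congruence_sym[OF \<theta> pl]] p] .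
  then have "(sup (inf x y) (inf x (pl y)), sup (inf x y) (inf ?p y)) \<in> \<theta>"
    by (rule pm_congruence_sup_left[OF \<theta>])
  moreover have "sup (inf x y) (inf ?p y) = inf x y"
    by (rule sup_absorb1) (simp add: inf.coboundedI1 le_infI1)
  ultimately show ?thesis by simp
qed

lemma pm_congruence_if_pc_pl:
  assumes \<theta>: "pm_congruence pc neg \<theta>" and law: regularity_law
    and pc: "(pc x, pc y) \<in> \<theta>" and pl: "(pl x, pl y) \<in> \<theta>"
  shows "(x, y) \<in> \<theta>"
proof -
  have "(x, inf x y) \<in> \<theta>" using pm_congruence_inf_if_pc_pl[OF \<theta> law pc pl] .
  moreover have "(y, inf y x) \<in> \<theta>"
    using pm_congruence_inf_if_pc_pl[OF \<theta> law pm_congruence_sym[OF \<theta> pc]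
        pm_congruence_sym[OF \<theta> pl]] .
  then have "(inf x y, y) \<in> \<theta>" using pm_congruence_sym[OF \<theta>] by (simp add: inf_commute)
  ultimately show ?thesis by (rule pm_congruence_trans[OF \<theta>])
qed

lemma pm_congruence_bot_class_transfer:
  assumes \<theta>: "pm_congruence pc neg \<theta>" and \<phi>: "pm_congruence pc neg \<phi>"
    and common: "\<theta> `` {c} = \<phi> `` {c}" and u: "(u, bot) \<in> \<theta>"
  shows "(u, bot) \<in> \<phi>"
proof -
  \<comment> \<open>In \<open>\<theta>\<close> both \<open>c \<sqinter> u*\<close> and \<open>c \<squnion> u**\<close> lie in the class of \<open>c\<close>, so they do in \<open>\<phi>\<close>;
    there this forces \<open>u** \<equiv> u** \<sqinter> c \<equiv> u** \<sqinter> c \<sqinter> u* = 0\<close>.\<close>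
  have pc_u: "(pc u, top) \<in> \<theta>" using pm_congruence_pc[OF \<theta> u] by simp
  have "(c, inf c (pc u)) \<in> \<theta>"
    using pm_congruence_sym[OF \<theta> pm_congruence_inf_left[OF \<theta> pc_u]] by simp
  then have c1: "(c, inf c (pc u)) \<in> \<phi>" using common by blast
  have pc_pc_u: "(pc (pc u), bot) \<in> \<theta>" using pm_congruence_pc[OF \<theta> pc_u] by simp
  have "(c, sup c (pc (pc u))) \<in> \<theta>"
    using pm_congruence_sym[OF \<theta> pm_congruence_sup_left[OF \<theta> pc_pc_u]] by simp
  then have c2: "(c, sup c (pc (pc u))) \<in> \<phi>" using common by blast
  have "(inf (pc (pc u)) (sup c (pc (pc u))), inf (pc (pc u)) c) \<in> \<phi>"
    using pm_congruence_inf_left[OF \<phi> pm_congruence_sym[OF \<phi> c2]] .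
  then have "(pc (pc u), inf (pc (pc u)) c) \<in> \<phi>" by (simp add: inf_absorb1)
  moreover have "(inf (pc (pc u)) c, inf (pc (pc u)) (inf c (pc u))) \<in> \<phi>"
    using pm_congruence_inf_left[OF \<phi> c1] .
  moreover have "inf (pc (pc u)) (inf c (pc u)) = bot"
    by (metis pc_inf_self inf_bot_right inf_left_commute)
  ultimately have "(pc (pc u), bot) \<in> \<phi>" using pm_congruence_trans[OF \<phi>] by metis
  then have "(inf u (pc (pc u)), inf u bot) \<in> \<phi>" by (rule pm_congruence_inf_left[OF \<phi>])
  then show ?thesis using le_pc_pc[of u] by (simp add: inf_absorb1)
qed

lemma pm_congruence_pc_transfer:
  assumes \<theta>: "pm_congruence pc neg \<theta>" and \<phi>: "pm_congruence pc neg \<phi>"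
    and common: "\<theta> `` {c} = \<phi> `` {c}" and xy: "(x, y) \<in> \<theta>"
  shows "(pc x, pc y) \<in> \<phi>"
proof -
  have absorb: "(pc x, inf (pc x) (pc y)) \<in> \<phi>" if "(x, y) \<in> \<theta>" for x y
  proof -
    have "(inf (pc x) (pc (pc y)), inf (pc x) (pc (pc x))) \<in> \<theta>"
      using pm_congruence_inf_left[OF \<theta> pm_congruence_pc[OF \<theta> pm_congruence_pc[OF \<theta>
            pm_congruence_sym[OF \<theta> that]]]] .
    then have "(inf (pc x) (pc (pc y)), bot) \<in> \<theta>" by simp
    then have "(inf (pc x) (pc (pc y)), bot) \<in> \<phi>"
      by (rule pm_congruence_bot_class_transfer[OF \<theta> \<phi> common])
    then have "(pc (inf (pc x) (pc (pc y))), top) \<in> \<phi>"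
      using pm_congruence_pc[OF \<phi>] by fastforce
    then have "(inf (pc x) (pc (inf (pc x) (pc (pc y)))), inf (pc x) top) \<in> \<phi>"
      by (rule pm_congruence_inf_left[OF \<phi>])
    then have "(inf (pc x) (pc y), pc x) \<in> \<phi>" by (simp add: inf_pc_inf)
    then show ?thesis by (rule pm_congruence_sym[OF \<phi>])
  qed
  have "(inf (pc x) (pc y), pc y) \<in> \<phi>"
    using pm_congruence_sym[OF \<phi> absorb[OF pm_congruence_sym[OF \<theta> xy]]]
    by (simp add: inf_commute)
  then show ?thesis by (rule pm_congruence_trans[OF \<phi> absorb[OF xy]])
qed

lemma pm_congruence_subset_if_common_class:
  assumes \<theta>: "pm_congruence pc neg \<theta>" and \<phi>: "pm_congruence pc neg \<phi>"
    and law: regularity_law and common: "\<theta> `` {c} = \<phi> `` {c}"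
  shows "\<theta> \<subseteq> \<phi>"
proof
  fix p assume "p \<in> \<theta>"
  then obtain x y where p: "p = (x, y)" and xy: "(x, y) \<in> \<theta>" by (cases p) blast
  have "(pc x, pc y) \<in> \<phi>" by (rule pm_congruence_pc_transfer[OF \<theta> \<phi> common xy])
  moreover have "(pc (neg x), pc (neg y)) \<in> \<phi>"
    by (rule pm_congruence_pc_transfer[OF \<theta> \<phi> common pm_congruence_neg[OF \<theta> xy]])
  then have "(pl x, pl y) \<in> \<phi>" unfolding pl_def by (rule pm_congruence_neg[OF \<phi>])
  ultimately show "p \<in> \<phi>" unfolding p by (rule pm_congruence_if_pc_pl[OF \<phi> law])
qed

lemma pm_regular_if_regularity_law:
  assumes law: regularity_law
  shows "pm_regular pc neg"
  unfolding pm_regular_def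
proof (intro allI impI)
  fix \<theta> \<phi> :: "'a rel"
  assume "pm_congruence pc neg \<theta> \<and> pm_congruence pc neg \<phi> \<and> (\<exists>a b. \<theta> `` {a} = \<phi> `` {b})"
  then obtain a b where \<theta>: "pm_congruence pc neg \<theta>" and \<phi>: "pm_congruence pc neg \<phi>"
    and common: "\<theta> `` {a} = \<phi> `` {b}" by blast
  have "(b, a) \<in> \<phi>" using common pm_congruence_refl[OF \<theta>, of a] by blast
  then have "\<phi> `` {b} = \<phi> `` {a}"
    using pm_congruence_trans[OF \<phi>] pm_congruence_sym[OF \<phi>] by blast
  with common have "\<theta> `` {a} = \<phi> `` {a}" by simp
  then show "\<theta> = \<phi>"
    using pm_congruence_subset_if_common_class[OF \<theta> \<phi> law]
      pm_congruence_subset_if_common_class[OF \<phi> \<theta> law] by blast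
qed

definition pc_neg_kernel :: "'a rel" where
  "pc_neg_kernel = {(x, y). pc x = pc y \<and> pc (neg x) = pc (neg y)}"

lemma pc_inf_cong:
  assumes "pc a = pc b" and "pc c = pc d"
  shows "pc (inf a c) = pc (inf b d)"
  by (metis assms pc_inf_pc_pc)

lemma pm_congruence_pc_neg_kernel: "pm_congruence pc neg pc_neg_kernel"
  unfolding pm_congruence_def
proof (intro conjI allI impI)
  show "equiv UNIV pc_neg_kernel"
    unfolding pc_neg_kernel_def by (rule equivI) (auto simp: refl_on_def sym_def trans_def)
  fix a b c d
  assume "(a, b) \<in> pc_neg_kernel"
  then have ab: "pc a = pc b" "pc (neg a) = pc (neg b)" unfolding pc_neg_kernel_def by auto
  then show "(pc a, pc b) \<in> pc_neg_kernel" "(neg a, neg b) \<in> pc_neg_kernel"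
    unfolding pc_neg_kernel_def by simp_all
  assume "(c, d) \<in> pc_neg_kernel"
  then have cd: "pc c = pc d" "pc (neg c) = pc (neg d)" unfolding pc_neg_kernel_def by auto
  show "(inf a c, inf b d) \<in> pc_neg_kernel" "(sup a c, sup b d) \<in> pc_neg_kernel"
    unfolding pc_neg_kernel_def
    using ab cd pc_inf_cong[OF ab(1) cd(1)] pc_inf_cong[OF ab(2) cd(2)]
    by (simp_all add: neg_inf neg_sup pc_sup)
qed

lemma pc_neg_kernel_Image_bot: "pc_neg_kernel `` {bot} = {bot}"
proof -
  have "x = bot" if "pc x = top" for x
    using inf_pc[of x] that by simp
  then show ?thesis unfolding pc_neg_kernel_def by auto
qed

lemma regularity_law_if_pm_regular:
  assumes "pm_regular pc neg"
  shows regularity_law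
  unfolding regularity_law_def
proof (intro allI)
  fix x y
  let ?u = "sup y (pc y)"
  have "pc_neg_kernel = Id"
    using assms pm_congruence_pc_neg_kernel pm_congruence_Id pc_neg_kernel_Image_bot
    unfolding pm_regular_def by (metis Id_onI Image_Id)
  moreover have "(sup (inf x (pl x)) ?u, ?u) \<in> pc_neg_kernel"
    unfolding pc_neg_kernel_def by (simp add: pc_sup neg_sup pc_inf_dense)
  ultimately have "sup (inf x (pl x)) ?u = ?u" by blast
  then show "inf x (pl x) \<le> ?u" by (metis sup_ge1)
qed

end

section \<open>Regularity and height\<close>

lemma height_le_1_iff_no_strict_chain:
  "height_le_1 P \<longleftrightarrow> \<not> (\<exists>J\<in>P. \<exists>I\<in>P. \<exists>K\<in>P. J \<subset> I \<and> I \<subset> K)"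
proof
  assume "height_le_1 P"
  show "\<not> (\<exists>J\<in>P. \<exists>I\<in>P. \<exists>K\<in>P. J \<subset> I \<and> I \<subset> K)"
  proof
    assume "\<exists>J\<in>P. \<exists>I\<in>P. \<exists>K\<in>P. J \<subset> I \<and> I \<subset> K"
    then obtain J I K where "{J, I, K} \<subseteq> P" "J \<subset> I" "I \<subset> K" by blast
    moreover from this have "\<forall>X\<in>{J, I, K}. \<forall>Y\<in>{J, I, K}. X \<subseteq> Y \<or> Y \<subseteq> X" by blast
    ultimately have "card {J, I, K} \<le> 2"
      using \<open>height_le_1 P\<close> unfolding height_le_1_def by blast
    moreover have "J \<noteq> I" "J \<noteq> K" "I \<noteq> K" using \<open>J \<subset> I\<close> \<open>I \<subset> K\<close> by blast+
    ultimately show False by simp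
  qed
next
  assume no_chain: "\<not> (\<exists>J\<in>P. \<exists>I\<in>P. \<exists>K\<in>P. J \<subset> I \<and> I \<subset> K)"
  show "height_le_1 P"
    unfolding height_le_1_def
  proof (intro allI impI)
    fix C assume "C \<subseteq> P \<and> (\<forall>I\<in>C. \<forall>J\<in>C. I \<subseteq> J \<or> J \<subseteq> I)"
    then have "C \<subseteq> P" and comparable: "\<And>I J. I \<in> C \<Longrightarrow> J \<in> C \<Longrightarrow> I \<subseteq> J \<or> J \<subseteq> I"
      by blast+
    show "finite C \<and> card C \<le> 2"
    proof (rule ccontr)
      assume big: "\<not> (finite C \<and> card C \<le> 2)"
      have not_sub: "\<not> C \<subseteq> {A, B}" for A B
      proof
        assume "C \<subseteq> {A, B}"
        moreover have "card {A, B} \<le> 2" by (simp add: card_insert_if)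
        ultimately show False
          using big card_mono[of "{A, B}" C] finite_subset[of C "{A, B}"] by simp
      qed
      obtain A where "A \<in> C" using not_sub[of undefined undefined] by blast
      moreover obtain B where "B \<in> C" "B \<noteq> A" using not_sub[of A A] by blast
      moreover obtain D where "D \<in> C" "D \<noteq> A" "D \<noteq> B" using not_sub[of A B] by blast
      ultimately have "\<exists>J\<in>C. \<exists>I\<in>C. \<exists>K\<in>C. J \<subset> I \<and> I \<subset> K"
        using comparable[of A B] comparable[of A D] comparable[of B D] by blast
      with \<open>C \<subseteq> P\<close> no_chain show False by blast
    qed
  qed
qed

theorem theorem3p1:
  fixes pc neg :: "'a::{bounded_lattice,distrib_lattice} \<Rightarrow> 'a"
  assumes "pm_algebra pc neg"
  shows "pm_regular pc neg \<longleftrightarrow> height_le_1 (dual_points :: 'a set set)"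
proof -
  interpret pm_alg pc neg using assms by (rule pm_alg_if_pm_algebra)
  have "pm_regular pc neg \<longleftrightarrow> regularity_law"
    using pm_regular_if_regularity_law regularity_law_if_pm_regular by blast
  also have "\<dots> \<longleftrightarrow>
      \<not> (\<exists>J\<in>dual_points. \<exists>I\<in>dual_points. \<exists>K\<in>dual_points. J \<subset> I \<and> I \<subset> (K :: 'a set))"
    using not_regularity_law_if_strict_chain strict_chain_if_not_regularity_law
    unfolding dual_points_def mem_Collect_eq by blast
  also have "\<dots> \<longleftrightarrow> height_le_1 (dual_points :: 'a set set)"
    by (rule height_le_1_iff_no_strict_chain[symmetric])
  finally show ?thesis .
qed

end
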